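(* Let $M$ be an infinite cancellative finitely generated hyperbolic monoid. Then $M$ contains an element of infinite order.
   Context: Cancellative means both left and right cancellative. For a monoid $M$ with finite generating set $A$, the (right) Cayley digraph has vertex set $M$ and a directed edge from $m$ to $ma$ for every $m\in M$, $a\in A$. For a digraph $D$, a directed path $x_0x_1\ldots x_n$ has edges $x_ix_{i+1}$ and length $n$; $d(x,y)$ is the length of a shortest directed $x$-$y$ path ($\infty$ if none), and such a shortest path is an $x$-$y$ geodesic. The out-ball $\mathcal{B}^+_k(x)$ is $\{y: d(x,y)\le k\}$, the in-ball $\mathcal{B}^-_k(x)$ is $\{y: d(y,x)\le k\}$; for a vertex set or path $Q$, $\mathcal{B}^\pm_k(Q)$ is the union of the corresponding balls around its vertices. A geodesic triangle consists of three vertices and, for each pair of them, a geodesic between them (in one of the two directions); these are its sides. It is $\delta$-thin if whenever $P,Q,R$ are its sides such that the start vertex of $P$ is the start or end vertex of $Q$ and the end vertex of $P$ is the start or end vertex of $R$, then $P\subseteq \mathcal{B}^+_\delta(Q)\cup\mathcal{B}^-_\delta(R)$. A digraph is $\delta$-hyperbolic if all its geodesic triangles are $\delta$-thin, and hyperbolic if it is $\delta$-hyperbolic for some $\delta\ge 0$. A finitely generated monoid is hyperbolic if its Cayley digraph with respect to a finite generating set is hyperbolic. *)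

theory Defs
  imports Main "HOL-Library.Extended_Nat"
begin

definition dipath :: "('v \<Rightarrow> 'v \<Rightarrow> bool) \<Rightarrow> 'v list \<Rightarrow> bool" where
  "dipath E p \<longleftrightarrow> p \<noteq> [] \<and> (\<forall>i. Suc i < length p \<longrightarrow> E (p ! i) (p ! Suc i))"

definition plen :: "'v list \<Rightarrow> nat" where
  "plen p = length p - 1"

text \<open>Directed distance; infinity if there is no directed path.\<close>
definition ddist :: "('v \<Rightarrow> 'v \<Rightarrow> bool) \<Rightarrow> 'v \<Rightarrow> 'v \<Rightarrow> enat" where
  "ddist E x y = (INF p \<in> {p. dipath E p \<and> hd p = x \<and> last p = y}. enat (plen p))"

definition geodesic :: "('v \<Rightarrow> 'v \<Rightarrow> bool) \<Rightarrow> 'v list \<Rightarrow> 'v \<Rightarrow> 'v \<Rightarrow> bool" where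
  "geodesic E p x y \<longleftrightarrow> dipath E p \<and> hd p = x \<and> last p = y \<and> enat (plen p) = ddist E x y"

definition out_ball :: "('v \<Rightarrow> 'v \<Rightarrow> bool) \<Rightarrow> nat \<Rightarrow> 'v set \<Rightarrow> 'v set" where
  "out_ball E k Q = {y. \<exists>x\<in>Q. ddist E x y \<le> enat k}"

definition in_ball :: "('v \<Rightarrow> 'v \<Rightarrow> bool) \<Rightarrow> nat \<Rightarrow> 'v set \<Rightarrow> 'v set" where
  "in_ball E k Q = {y. \<exists>x\<in>Q. ddist E y x \<le> enat k}"

definition geodesic_triangle ::
  "('v \<Rightarrow> 'v \<Rightarrow> bool) \<Rightarrow> (nat \<Rightarrow> 'v) \<Rightarrow> (nat \<Rightarrow> 'v list) \<Rightarrow> bool" where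
  "geodesic_triangle E x S \<longleftrightarrow>
     (\<forall>i<3. geodesic E (S i) (x i) (x (Suc i mod 3)) \<or> geodesic E (S i) (x (Suc i mod 3)) (x i))"

definition thin_triangle :: "('v \<Rightarrow> 'v \<Rightarrow> bool) \<Rightarrow> nat \<Rightarrow> (nat \<Rightarrow> 'v list) \<Rightarrow> bool" where
  "thin_triangle E \<delta> S \<longleftrightarrow>
     (\<forall>i<3. \<forall>j<3. \<forall>k<3. i \<noteq> j \<and> j \<noteq> k \<and> i \<noteq> k \<longrightarrow>
        hd (S i) \<in> {hd (S j), last (S j)} \<longrightarrow> last (S i) \<in> {hd (S k), last (S k)} \<longrightarrow>
        set (S i) \<subseteq> out_ball E \<delta> (set (S j)) \<union> in_ball E \<delta> (set (S k)))"

definition hyperbolic_digraph :: "('v \<Rightarrow> 'v \<Rightarrow> bool) \<Rightarrow> bool" where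
  "hyperbolic_digraph E \<longleftrightarrow>
     (\<exists>\<delta>::nat. \<forall>x S. geodesic_triangle E x S \<longrightarrow> thin_triangle E \<delta> S)"

definition generated_submonoid :: "'a::monoid_mult set \<Rightarrow> 'a set" where
  "generated_submonoid A = {prod_list xs | xs. set xs \<subseteq> A}"

definition cayley_digraph :: "'a::monoid_mult set \<Rightarrow> 'a \<Rightarrow> 'a \<Rightarrow> bool" where
  "cayley_digraph A m m' \<longleftrightarrow> (\<exists>a\<in>A. m' = m * a)"

definition cancellative :: "'a::monoid_mult itself \<Rightarrow> bool" where
  "cancellative _ \<longleftrightarrow> (\<forall>a b c::'a. a * b = a * c \<longrightarrow> b = c) \<and> (\<forall>a b c::'a. b * a = c * a \<longrightarrow> b = c)"

definition hyperbolic_monoid :: "'a::monoid_mult itself \<Rightarrow> bool" where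
  "hyperbolic_monoid _ \<longleftrightarrow>
     (\<exists>A::'a set. finite A \<and> generated_submonoid A = UNIV \<and> hyperbolic_digraph (cayley_digraph A))"

definition infinite_order :: "'a::monoid_mult \<Rightarrow> bool" where
  "infinite_order m \<longleftrightarrow> infinite (range (\<lambda>n::nat. m ^ n))"

end

theory Submission
  imports Defs
begin

text \<open>
  If some element has no right inverse, left cancellation makes its powers pairwise distinct.
  Otherwise the monoid is a group, and we run Cannon's cone type argument in its (possibly
  asymmetric) Cayley digraph. Record for \<open>x\<close> the increments \<open>|xg| - |x|\<close> of word length over
  a ball \<open>|g| \<le> R\<close>; there are only finitely many such profiles. Thin triangles show that two
  elements with the same profile have the same increments along every geodesic continuation
  \<open>u\<close> of the first one (\<open>|xu| = |x| + |u|\<close>): a long continuation has a prefix within bounded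
  distance of a geodesic from \<open>1\<close> to \<open>xuv\<close>, so induction on \<open>|u|\<close> applies. Along a geodesic
  word that is longer than the number of profiles, two prefixes \<open>x\<close> and \<open>xh\<close> share a profile,
  and then \<open>|xh\<^sup>m| = |x| + m|h|\<close> for all \<open>m\<close>, so \<open>h\<close> has infinite order.
\<close>

lemma infinite_orderI: "inj (\<lambda>n::nat. x ^ n) \<Longrightarrow> infinite_order x"
  unfolding infinite_order_def using finite_imageD infinite_UNIV_nat by blast

lemma infinite_order_if_no_right_inverse:
  fixes x :: "'a::monoid_mult"
  assumes left_cancel: "\<And>a b c::'a. a * b = a * c \<Longrightarrow> b = c"
    and no_inverse: "\<And>y. x * y \<noteq> 1"
  shows "infinite_order x"
proof -
  have "x ^ a \<noteq> x ^ b" if "a < b" for a b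
  proof
    assume "x ^ a = x ^ b"
    moreover have "x ^ a * x ^ (b - a) = x ^ b"
      using that by (simp flip: power_add)
    ultimately have "x ^ a * x ^ (b - a) = x ^ a * 1"
      by simp
    then have "x ^ (b - a) = 1"
      by (rule left_cancel)
    moreover have "b - a = Suc (b - a - 1)"
      using that by simp
    ultimately have "x * x ^ (b - a - 1) = 1"
      by (metis power_Suc)
    with no_inverse show False
      by blast
  qed
  then show ?thesis
    by (intro infinite_orderI linorder_injI)
qed

lemma prod_list_take_split:
  "i \<le> j \<Longrightarrow> prod_list (take j w) = prod_list (take i w) * prod_list (drop i (take j w))"
  by (metis append_take_drop_id min_def prod_list.append take_take)

definition word_path :: "'a::monoid_mult \<Rightarrow> 'a list \<Rightarrow> 'a list" where
  "word_path x w = map (\<lambda>k. x * prod_list (take k w)) [0..<Suc (length w)]"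

lemma length_word_path [simp]: "length (word_path x w) = Suc (length w)"
  by (simp add: word_path_def)

lemma word_path_nth: "i \<le> length w \<Longrightarrow> word_path x w ! i = x * prod_list (take i w)"
  unfolding word_path_def by (simp add: nth_append less_Suc_eq_le del: upt_Suc)

lemma word_path_not_Nil [simp]: "word_path x w \<noteq> []"
  by (simp add: word_path_def)

lemma hd_word_path [simp]: "hd (word_path x w) = x"
  by (simp add: hd_conv_nth word_path_nth)

lemma last_word_path [simp]: "last (word_path x w) = x * prod_list w"
  by (simp add: last_conv_nth word_path_nth)

lemma plen_word_path [simp]: "plen (word_path x w) = length w"
  by (simp add: plen_def)

lemma word_path_Nil [simp]: "word_path x [] = [x]"
  by (simp add: word_path_def)

lemma word_path_Cons: "word_path x (a # w) = x # word_path (x * a) w"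
  by (rule nth_equalityI) (auto simp: word_path_nth nth_Cons mult.assoc split: nat.split)

lemma set_word_path: "y \<in> set (word_path x w) \<Longrightarrow> \<exists>i\<le>length w. y = x * prod_list (take i w)"
  by (auto simp: in_set_conv_nth word_path_nth less_Suc_eq_le)

lemma dipath_word_path: "set w \<subseteq> A \<Longrightarrow> dipath (cayley_digraph A) (word_path x w)"
  unfolding dipath_def cayley_digraph_def
  by (auto simp: word_path_nth take_Suc_conv_app_nth mult.assoc intro!: bexI[of _ "w ! _"])

lemma dipath_Cons: "p \<noteq> [] \<Longrightarrow> dipath E (a # p) \<longleftrightarrow> E a (hd p) \<and> dipath E p"
  unfolding dipath_def by (auto simp: hd_conv_nth nth_Cons split: nat.split)

lemma dipath_cayley_digraph_word_path:
  "dipath (cayley_digraph A) p \<Longrightarrow> \<exists>w. set w \<subseteq> A \<and> p = word_path (hd p) w"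
proof (induction p)
  case Nil
  then show ?case by (simp add: dipath_def)
next
  case (Cons a p)
  show ?case
  proof (cases "p = []")
    case True
    then show ?thesis by (intro exI[of _ "[]"]) simp
  next
    case False
    with Cons.prems have "cayley_digraph A a (hd p)" "dipath (cayley_digraph A) p"
      by (simp_all add: dipath_Cons)
    then obtain b w where b: "b \<in> A" "hd p = a * b" and w: "set w \<subseteq> A" "p = word_path (hd p) w"
      using Cons.IH unfolding cayley_digraph_def by blast
    have "a # p = word_path a (b # w)"
      by (subst w(2)) (simp add: b(2) word_path_Cons)
    with b(1) w(1) show ?thesis
      by (intro exI[of _ "b # w"]) simp
  qed
qed

lemma ddist_cayley_digraph_le_iff:
  "ddist (cayley_digraph A) x y \<le> enat n \<longleftrightarrow>
     (\<exists>w. set w \<subseteq> A \<and> length w \<le> n \<and> y = x * prod_list w)"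
proof
  let ?P = "{p. dipath (cayley_digraph A) p \<and> hd p = x \<and> last p = y}"
  assume le: "ddist (cayley_digraph A) x y \<le> enat n"
  have "?P \<noteq> {}"
  proof
    assume none: "?P = {}"
    have "ddist (cayley_digraph A) x y = \<infinity>"
      unfolding ddist_def none by (simp add: top_enat_def)
    with le show False
      by simp
  qed
  then have "ddist (cayley_digraph A) x y \<in> (\<lambda>p. enat (plen p)) ` ?P"
    unfolding ddist_def by (blast intro: wellorder_InfI)
  then obtain p where p: "p \<in> ?P" "ddist (cayley_digraph A) x y = enat (plen p)"
    by blast
  then obtain w where "set w \<subseteq> A" "p = word_path x w"
    using dipath_cayley_digraph_word_path by fastforce
  with p le show "\<exists>w. set w \<subseteq> A \<and> length w \<le> n \<and> y = x * prod_list w"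
    by auto
next
  assume "\<exists>w. set w \<subseteq> A \<and> length w \<le> n \<and> y = x * prod_list w"
  then obtain w where w: "set w \<subseteq> A" "length w \<le> n" "y = x * prod_list w"
    by blast
  then have "ddist (cayley_digraph A) x y \<le> enat (plen (word_path x w))"
    unfolding ddist_def by (intro INF_lower) (auto simp: dipath_word_path)
  with w(2) show "ddist (cayley_digraph A) x y \<le> enat n"
    by (simp add: order_trans)
qed

locale cayley_group =
  fixes A :: "'a::monoid_mult set"
  assumes finite_gens: "finite A"
    and generates: "generated_submonoid A = UNIV"
    and left_cancel: "\<And>a b c::'a. a * b = a * c \<Longrightarrow> b = c"
    and right_inverse: "\<And>x::'a. \<exists>y. x * y = 1"
begin

abbreviation Cay :: "'a \<Rightarrow> 'a \<Rightarrow> bool" where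
  "Cay \<equiv> cayley_digraph A"

definition wdist :: "'a \<Rightarrow> 'a \<Rightarrow> nat" where
  "wdist x y = the_enat (ddist Cay x y)"

definition wlen :: "'a \<Rightarrow> nat" where
  "wlen x = wdist 1 x"

lemma ex_word: "\<exists>w. set w \<subseteq> A \<and> prod_list w = x"
proof -
  have "x \<in> generated_submonoid A"
    using generates by simp
  then show ?thesis
    unfolding generated_submonoid_def by blast
qed

lemma ddist_eq_wdist: "ddist Cay x y = enat (wdist x y)"
proof -
  obtain x' where "x * x' = 1"
    using right_inverse by blast
  moreover obtain w where "set w \<subseteq> A" "prod_list w = x' * y"
    using ex_word by blast
  ultimately have "set w \<subseteq> A" "y = x * prod_list w"
    by (simp_all flip: mult.assoc)
  then have "ddist Cay x y \<le> enat (length w)"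
    unfolding ddist_cayley_digraph_le_iff by blast
  then show ?thesis
    unfolding wdist_def by (cases "ddist Cay x y") auto
qed

lemma ex_right_factor: "\<exists>y. z = x * (y::'a)"
proof -
  obtain x' where "x * x' = 1"
    using right_inverse by blast
  then have "z = x * (x' * z)"
    by (simp flip: mult.assoc)
  then show ?thesis ..
qed

lemma wdist_le_iff: "wdist x y \<le> n \<longleftrightarrow> (\<exists>w. set w \<subseteq> A \<and> length w \<le> n \<and> y = x * prod_list w)"
  using ddist_cayley_digraph_le_iff[of A x y n] by (simp add: ddist_eq_wdist)

lemma obtain_geodesic_word:
  obtains w where "set w \<subseteq> A" "length w = wdist x y" "y = x * prod_list w"
proof -
  obtain w where w: "set w \<subseteq> A" "length w \<le> wdist x y" "y = x * prod_list w"
    using wdist_le_iff by blast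
  then have "wdist x y \<le> length w"
    using wdist_le_iff by blast
  with w that show thesis
    by simp
qed

lemma wdist_word_le: "set w \<subseteq> A \<Longrightarrow> wdist x (x * prod_list w) \<le> length w"
  using wdist_le_iff by blast

lemma wdist_self [simp]: "wdist x x = 0"
  using wdist_word_le[of "[]" x] by simp

lemma wlen_one [simp]: "wlen 1 = 0"
  by (simp add: wlen_def)

lemma wdist_triangle: "wdist x z \<le> wdist x y + wdist y z"
proof -
  obtain v where v: "set v \<subseteq> A" "length v = wdist x y" "y = x * prod_list v"
    by (rule obtain_geodesic_word)
  obtain w where w: "set w \<subseteq> A" "length w = wdist y z" "z = y * prod_list w"
    by (rule obtain_geodesic_word)
  have "wdist x (x * prod_list (v @ w)) \<le> length (v @ w)"
    using v w by (intro wdist_word_le) auto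
  with v w show ?thesis
    by (simp add: mult.assoc)
qed

lemma wdist_mult_left: "wdist (g * x) (g * y) = wdist x y"
proof (rule antisym)
  obtain w where w: "set w \<subseteq> A" "length w = wdist x y" "y = x * prod_list w"
    by (rule obtain_geodesic_word)
  then show "wdist (g * x) (g * y) \<le> wdist x y"
    using wdist_word_le[of w "g * x"] by (simp add: mult.assoc)
next
  obtain w where w: "set w \<subseteq> A" "length w = wdist (g * x) (g * y)" "g * y = g * x * prod_list w"
    by (rule obtain_geodesic_word)
  then have "g * y = g * (x * prod_list w)"
    by (simp add: mult.assoc)
  then have "y = x * prod_list w"
    by (rule left_cancel)
  with w show "wdist x y \<le> wdist (g * x) (g * y)"
    using wdist_word_le[of w x] by simp
qed

lemma wdist_mult_eq_wlen [simp]: "wdist x (x * y) = wlen y"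
  using wdist_mult_left[of x 1 y] by (simp add: wlen_def)

text \<open>The digraph need not be symmetric: \<open>K\<close> bounds the cost of walking back along an edge.\<close>
definition K :: nat where
  "K = (\<Sum>a\<in>A. wdist a 1)"

lemma wdist_reverse_le: "wdist y x \<le> K * wdist x y"
proof -
  have return_le: "wdist (x * prod_list w) x \<le> K * length w" if "set w \<subseteq> A" for w x
    using that
  proof (induction w arbitrary: x)
    case Nil
    then show ?case by simp
  next
    case (Cons a w)
    have "wdist (x * prod_list (a # w)) x \<le> wdist (x * a * prod_list w) (x * a) + wdist (x * a) x"
      using wdist_triangle by (simp add: mult.assoc)
    also have "wdist (x * a * prod_list w) (x * a) \<le> K * length w"
      using Cons by simp
    also have "wdist (x * a) x = wdist a 1"
      using wdist_mult_left[of x a 1] by simp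
    also have "wdist a 1 \<le> K"
      unfolding K_def using Cons.prems finite_gens by (intro member_le_sum) auto
    finally show ?case
      by simp
  qed
  obtain w where "set w \<subseteq> A" "length w = wdist x y" "y = x * prod_list w"
    by (rule obtain_geodesic_word)
  then show ?thesis
    using return_le[of w x] by simp
qed

lemma wlen_mult_le: "wlen (x * y) \<le> wlen x + wlen y"
  using wdist_triangle[of 1 "x * y" x] by (simp add: wlen_def)

lemma wlen_le_mult: "wlen x \<le> wlen (x * y) + K * wlen y"
  using wdist_triangle[of 1 x "x * y"] wdist_reverse_le[where x = x and y = "x * y"]
  by (simp add: wlen_def)

lemma wlen_power_le: "wlen (x ^ n) \<le> n * wlen x"
proof (induction n)
  case (Suc n)
  then show ?case
    using wlen_mult_le[of x "x ^ n"] by simp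
qed simp

lemma wlen_prod_list_le: "set w \<subseteq> A \<Longrightarrow> wlen (prod_list w) \<le> length w"
  unfolding wlen_def using wdist_word_le[of w 1] by simp

lemma wdist_prefix_le: "set w \<subseteq> A \<Longrightarrow> wdist x (x * prod_list (take i w)) \<le> i"
  using wdist_word_le[of "take i w" x] set_take_subset[of i w] by fastforce

lemma wdist_suffix_le:
  "set w \<subseteq> A \<Longrightarrow> wdist (x * prod_list (take i w)) (x * prod_list w) \<le> length w - i"
proof -
  assume "set w \<subseteq> A"
  then have "set (drop i w) \<subseteq> A"
    using set_drop_subset by fastforce
  moreover have "x * prod_list w = x * prod_list (take i w) * prod_list (drop i w)"
    by (simp add: mult.assoc flip: prod_list.append)
  ultimately show ?thesis
    using wdist_word_le[of "drop i w" "x * prod_list (take i w)"] by simp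
qed

lemma wlen_take_geodesic:
  assumes "set w \<subseteq> A" "wlen (z * prod_list w) = wlen z + length w" "t \<le> length w"
  shows "wlen (z * prod_list (take t w)) = wlen z + t \<and> wlen (prod_list (take t w)) = t"
proof -
  have "wlen (z * prod_list w)
      \<le> wlen (z * prod_list (take t w)) + wdist (z * prod_list (take t w)) (z * prod_list w)"
    unfolding wlen_def by (rule wdist_triangle)
  moreover have "wdist (z * prod_list (take t w)) (z * prod_list w) \<le> length w - t"
    using assms(1) by (rule wdist_suffix_le)
  moreover have "wlen (prod_list (take t w)) \<le> t"
    using wdist_prefix_le[OF assms(1), of 1 t] by (simp add: wlen_def)
  moreover have "wlen (z * prod_list (take t w)) \<le> wlen z + wlen (prod_list (take t w))"
    by (rule wlen_mult_le)
  ultimately show ?thesis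
    using assms(2,3) by (intro conjI; linarith)
qed

lemma wlen_infix_geodesic:
  assumes "set w \<subseteq> A" "wlen (prod_list w) = length w" "i \<le> j" "j \<le> length w"
  shows "wlen (prod_list (drop i (take j w))) = j - i"
proof -
  have "set (drop i (take j w)) \<subseteq> A"
    using assms(1) by (meson in_set_dropD in_set_takeD subset_iff)
  then have "wlen (prod_list (drop i (take j w))) \<le> j - i"
    using wlen_prod_list_le[of "drop i (take j w)"] assms(4) by simp
  moreover have "wlen (prod_list (take i w)) = i" "wlen (prod_list (take j w)) = j"
    using wlen_take_geodesic[of w 1] assms by simp_all
  moreover have "wlen (prod_list (take j w))
      \<le> wlen (prod_list (take i w)) + wlen (prod_list (drop i (take j w)))"
    unfolding prod_list_take_split[OF assms(3), of w] by (rule wlen_mult_le)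
  ultimately show ?thesis
    by linarith
qed

lemma finite_wlen_le: "finite {x. wlen x \<le> n}"
proof -
  have "{x. wlen x \<le> n} \<subseteq> prod_list ` {w. set w \<subseteq> A \<and> length w \<le> n}"
    unfolding wlen_def wdist_le_iff by auto
  then show ?thesis
    using finite_lists_length_le[OF finite_gens] finite_surj by blast
qed

lemma geodesic_word_path:
  "set w \<subseteq> A \<Longrightarrow> length w = wdist x y \<Longrightarrow> y = x * prod_list w \<Longrightarrow> geodesic Cay (word_path x w) x y"
  unfolding geodesic_def by (simp add: dipath_word_path ddist_eq_wdist)

lemma wdist_geodesic_split:
  assumes "geodesic Cay p x z" "y \<in> set p"
  shows "wdist x y + wdist y z = wdist x z"
proof -
  obtain w where w: "set w \<subseteq> A" "p = word_path x w"
    using assms(1) dipath_cayley_digraph_word_path unfolding geodesic_def by blast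
  with assms(1) have len: "length w = wdist x z" and z: "z = x * prod_list w"
    by (auto simp: geodesic_def ddist_eq_wdist)
  obtain i where i: "i \<le> length w" "y = x * prod_list (take i w)"
    using set_word_path assms(2) w(2) by blast
  have "wdist x y \<le> i"
    using wdist_prefix_le[OF w(1)] i(2) by simp
  moreover have "wdist y z \<le> length w - i"
    using wdist_suffix_le[OF w(1)] i(2) z by simp
  ultimately show ?thesis
    using wdist_triangle[of x z y] i(1) len by linarith
qed

lemma geodesic_through:
  assumes "wdist x y + wdist y z = wdist x z"
  obtains p where "geodesic Cay p x z" "y \<in> set p"
proof -
  obtain v where v: "set v \<subseteq> A" "length v = wdist x y" "y = x * prod_list v"
    by (rule obtain_geodesic_word)
  obtain w where w: "set w \<subseteq> A" "length w = wdist y z" "z = y * prod_list w"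
    by (rule obtain_geodesic_word)
  have "geodesic Cay (word_path x (v @ w)) x z"
    using v w assms by (intro geodesic_word_path) (auto simp: mult.assoc)
  moreover have "word_path x (v @ w) ! length v = y"
    using v by (simp add: word_path_nth)
  then have "y \<in> set (word_path x (v @ w))"
    using nth_mem[of "length v" "word_path x (v @ w)"] by simp
  ultimately show thesis
    using that by blast
qed

lemma obtain_geodesic:
  obtains p where "geodesic Cay p x y"
  using geodesic_through[of x x y] by auto

end

locale hyperbolic_cayley_group = cayley_group +
  fixes \<delta> :: nat
  assumes thin: "\<And>x S. geodesic_triangle (cayley_digraph A) x S \<Longrightarrow> thin_triangle (cayley_digraph A) \<delta> S"
begin

lemma thin_geodesics:
  assumes "geodesic Cay \<gamma> x y" "geodesic Cay \<sigma> y z" "geodesic Cay \<beta> x z"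
  shows "set \<gamma> \<subseteq> out_ball Cay \<delta> (set \<beta>) \<union> in_ball Cay \<delta> (set \<sigma>)"
proof -
  let ?x = "(!) [x, y, z]" and ?S = "(!) [\<gamma>, \<sigma>, \<beta>]"
  have "geodesic_triangle Cay ?x ?S"
    unfolding geodesic_triangle_def
  proof (intro allI impI)
    fix i :: nat
    assume "i < 3"
    then consider "i = 0" | "i = 1" | "i = 2"
      by linarith
    then show "geodesic Cay (?S i) (?x i) (?x (Suc i mod 3)) \<or> geodesic Cay (?S i) (?x (Suc i mod 3)) (?x i)"
      by cases (use assms in simp_all)
  qed
  then have "thin_triangle Cay \<delta> ?S"
    by (rule thin)
  then have "set (?S 0) \<subseteq> out_ball Cay \<delta> (set (?S 2)) \<union> in_ball Cay \<delta> (set (?S 1))"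
    unfolding thin_triangle_def
    by (elim allE[of _ 0] allE[of _ 2] allE[of _ 1] impE) (use assms in \<open>simp_all add: geodesic_def\<close>)
  then show ?thesis
    by simp
qed

lemma geodesic_prefix_detour:
  assumes w: "set w \<subseteq> A" and geo: "wlen (z * prod_list w) = wlen z + length w"
    and v: "wlen v \<le> r" and long: "\<delta> + (K + 1) * r < length w"
  obtains t y where "t < length w" "wlen y \<le> K * \<delta>"
    "wlen (z * prod_list (take t w) * y) + wdist (z * prod_list (take t w) * y) (z * prod_list w * v)
       = wlen (z * prod_list w * v)"
proof -
  define u where "u = prod_list w"
  define t where "t = length w - (\<delta> + (K + 1) * r + 1)"
  define q where "q = z * prod_list (take t w)"
  have t: "t < length w"
    using long by (simp add: t_def)
  have wlen_q: "wlen q = wlen z + t"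
    using wlen_take_geodesic[OF w geo, of t] t by (simp add: q_def)
  have "wdist q (z * u) \<le> length w - t"
    unfolding q_def u_def using w by (rule wdist_suffix_le)
  then have "wdist 1 q + wdist q (z * u) = wdist 1 (z * u)"
    using wdist_triangle[of 1 "z * u" q] wlen_q geo t unfolding wlen_def u_def by linarith
  then obtain \<gamma> where \<gamma>: "geodesic Cay \<gamma> 1 (z * u)" "q \<in> set \<gamma>"
    by (rule geodesic_through)
  obtain \<sigma> where \<sigma>: "geodesic Cay \<sigma> (z * u) (z * u * v)"
    by (rule obtain_geodesic)
  obtain \<beta> where \<beta>: "geodesic Cay \<beta> 1 (z * u * v)"
    by (rule obtain_geodesic)
  have "q \<in> out_ball Cay \<delta> (set \<beta>) \<union> in_ball Cay \<delta> (set \<sigma>)"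
    using thin_geodesics[OF \<gamma>(1) \<sigma> \<beta>] \<gamma>(2) by blast
  \<comment> \<open>\<open>q\<close> lies too far before \<open>z * u\<close> to be \<open>\<delta>\<close>-close to the short side \<open>\<sigma>\<close>\<close>
  moreover have "q \<notin> in_ball Cay \<delta> (set \<sigma>)"
  proof
    assume "q \<in> in_ball Cay \<delta> (set \<sigma>)"
    then obtain s where s: "s \<in> set \<sigma>" "wdist q s \<le> \<delta>"
      unfolding in_ball_def by (auto simp: ddist_eq_wdist)
    have "wdist s (z * u * v) \<le> r"
      using wdist_geodesic_split[OF \<sigma> s(1)] v by simp
    then have "wlen (z * u * v) \<le> wlen q + \<delta> + r"
      using wdist_triangle[of 1 "z * u * v" q] wdist_triangle[of q "z * u * v" s] s(2)
      unfolding wlen_def by linarith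
    moreover have "wlen (z * u) \<le> wlen (z * u * v) + K * r"
      using wlen_le_mult[of "z * u" v] mult_le_mono2[OF v, of K] by linarith
    moreover have "(K + 1) * r = K * r + r"
      by simp
    ultimately show False
      using wlen_q geo long unfolding t_def u_def by linarith
  qed
  ultimately obtain b where b: "b \<in> set \<beta>" "wdist b q \<le> \<delta>"
    unfolding out_ball_def by (auto simp: ddist_eq_wdist)
  obtain y where y: "b = q * y"
    using ex_right_factor by blast
  have "wlen y \<le> K * wdist b q"
    using wdist_reverse_le[of q b] y by simp
  also have "\<dots> \<le> K * \<delta>"
    using b(2) by simp
  finally have "wlen y \<le> K * \<delta>" .
  moreover have "wlen b + wdist b (z * u * v) = wlen (z * u * v)"
    using wdist_geodesic_split[OF \<beta> b(1)] by (simp add: wlen_def)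
  ultimately show thesis
    using that t y unfolding q_def u_def by blast
qed

text \<open>
  Radii of the cone type argument: \<open>r0\<close> covers the generators and the detours of
  \<open>geodesic_prefix_detour\<close>, and geodesic words of length at least \<open>n0\<close> have such a detour.
\<close>
definition r0 :: nat where
  "r0 = K * \<delta> + 1"

definition n0 :: nat where
  "n0 = \<delta> + (K + 1) * r0 + 1"

lemma increment_le_if_prefix_increments_agree:
  assumes w: "set w \<subseteq> A" and geo: "wlen (z * prod_list w) = wlen z + length w"
    and long: "n0 \<le> length w" and v: "wlen v \<le> r0"
    and agree: "\<And>t y. t < length w \<Longrightarrow> wlen y \<le> r0 \<Longrightarrow>
      wlen (z * prod_list (take t w) * y) + wlen z' = wlen (z' * prod_list (take t w) * y) + wlen z"
  shows "wlen (z' * prod_list w * v) + wlen z \<le> wlen (z * prod_list w * v) + wlen z'"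
proof -
  from long have "\<delta> + (K + 1) * r0 < length w"
    by (simp add: n0_def)
  with w geo v obtain t y where t: "t < length w" "wlen y \<le> K * \<delta>"
    and on_geodesic: "wlen (z * prod_list (take t w) * y)
        + wdist (z * prod_list (take t w) * y) (z * prod_list w * v) = wlen (z * prod_list w * v)"
    by (rule geodesic_prefix_detour)
  have "wlen (z * prod_list (take t w) * y) + wlen z' = wlen (z' * prod_list (take t w) * y) + wlen z"
    using agree t by (simp add: r0_def)
  moreover have "wdist (z' * prod_list (take t w) * y) (z' * prod_list w * v)
      = wdist (z * prod_list (take t w) * y) (z * prod_list w * v)"
    using wdist_mult_left[of z' "prod_list (take t w) * y" "prod_list w * v"]
      wdist_mult_left[of z "prod_list (take t w) * y" "prod_list w * v"]
    by (simp add: mult.assoc)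
  moreover have "wlen (z' * prod_list w * v)
      \<le> wlen (z' * prod_list (take t w) * y) + wdist (z' * prod_list (take t w) * y) (z' * prod_list w * v)"
    unfolding wlen_def by (rule wdist_triangle)
  ultimately show ?thesis
    using on_geodesic by linarith
qed

lemma increments_agree_along_geodesic:
  assumes agree: "\<And>g. wlen g \<le> n0 + r0 \<Longrightarrow> wlen (x * g) + wlen x' = wlen (x' * g) + wlen x"
  shows "wlen (x * u) = wlen x + wlen u \<Longrightarrow> wlen v \<le> r0 \<Longrightarrow>
    wlen (x * u * v) + wlen x' = wlen (x' * u * v) + wlen x"
proof (induction "wlen u" arbitrary: u v rule: less_induct)
  case less
  show ?case
  proof (cases "wlen u < n0")
    case True
    then have "wlen (u * v) \<le> n0 + r0"
      using wlen_mult_le[of u v] less.prems(2) by linarith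
    then show ?thesis
      using agree by (simp add: mult.assoc)
  next
    case False
    obtain w where w: "set w \<subseteq> A" "length w = wlen u" "u = prod_list w"
      using obtain_geodesic_word[of 1 u] by (auto simp: wlen_def)
    have geo: "wlen (x * prod_list w) = wlen x + length w"
      using less.prems(1) w by simp
    have prefix_agree: "wlen (x * prod_list (take t w) * y) + wlen x'
        = wlen (x' * prod_list (take t w) * y) + wlen x"
      if "t < length w" "wlen y \<le> r0" for t y
      using less.hyps[of "prod_list (take t w)" y] wlen_take_geodesic[OF w(1) geo, of t] that w(2)
      by simp
    have "w \<noteq> []"
      using False w(2) by (auto simp: n0_def)
    then have "prod_list w = prod_list (butlast w @ [last w])"
      by simp
    then have split_last: "u = prod_list (take (length w - 1) w) * last w"
      using w(3) by (simp add: butlast_conv_take)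
    have "wlen (last w) \<le> r0"
      using wlen_prod_list_le[of "[last w]"] w(1) last_in_set[OF \<open>w \<noteq> []\<close>] by (auto simp: r0_def)
    then have "wlen (x * u) + wlen x' = wlen (x' * u) + wlen x"
      using prefix_agree[of "length w - 1" "last w"] \<open>w \<noteq> []\<close> split_last by (simp add: mult.assoc)
    then have geo': "wlen (x' * prod_list w) = wlen x' + length w"
      using geo w(3) by simp
    have "wlen (x' * prod_list w * v) + wlen x \<le> wlen (x * prod_list w * v) + wlen x'"
      using w(1) geo _ less.prems(2) prefix_agree
      by (rule increment_le_if_prefix_increments_agree) (use False w(2) in simp)
    moreover have "wlen (x * prod_list w * v) + wlen x' \<le> wlen (x' * prod_list w * v) + wlen x"
      using w(1) geo' _ less.prems(2)
      by (rule increment_le_if_prefix_increments_agree) (use False w(2) prefix_agree in simp_all)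
    ultimately show ?thesis
      using w(3) by simp
  qed
qed

lemma wlen_mult_power:
  assumes agree: "\<And>g. wlen g \<le> n0 + r0 \<Longrightarrow> wlen (x * g) + wlen (x * h) = wlen (x * h * g) + wlen x"
    and geo: "wlen (x * h) = wlen x + wlen h"
  shows "wlen (x * h ^ m) = wlen x + m * wlen h"
proof (induction m)
  case 0
  then show ?case by simp
next
  case (Suc m)
  have "wlen (h ^ m) = m * wlen h"
    using wlen_power_le[of h m] wlen_mult_le[of x "h ^ m"] Suc.IH by linarith
  then have "wlen (x * h ^ m) + wlen (x * h) = wlen (x * h * h ^ m) + wlen x"
    using increments_agree_along_geodesic[OF agree, of "h ^ m" 1] Suc.IH by simp
  then show ?case
    using Suc.IH geo by (simp add: mult.assoc)
qed

definition increments :: "nat \<Rightarrow> 'a \<Rightarrow> 'a \<Rightarrow> int" where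
  "increments r x g = (if wlen g \<le> r then int (wlen (x * g)) - int (wlen x) else 0)"

lemma finite_range_increments: "finite (range (increments r))"
proof -
  let ?B = "{g. wlen g \<le> r}" and ?I = "{- int (K * r)..int r}"
  have "increments r x g \<in> ?I" if "g \<in> ?B" for x g
  proof -
    from that have "wlen g \<le> r"
      by simp
    then have "wlen (x * g) \<le> wlen x + r" "wlen x \<le> wlen (x * g) + K * r"
      using wlen_mult_le[of x g] wlen_le_mult[of x g] mult_le_mono2[of "wlen g" r K] by linarith+
    then have "int (wlen (x * g)) - int (wlen x) \<in> ?I"
      unfolding atLeastAtMost_iff by (intro conjI; linarith)
    with \<open>wlen g \<le> r\<close> show ?thesis
      by (simp add: increments_def)
  qed
  moreover have "increments r x g = 0" if "g \<notin> ?B" for x g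
    using that by (simp add: increments_def)
  ultimately have "range (increments r) \<subseteq> {f. \<forall>g. (g \<in> ?B \<longrightarrow> f g \<in> ?I) \<and> (g \<notin> ?B \<longrightarrow> f g = 0)}"
    by blast
  then show ?thesis
    using finite_set_of_finite_funs[OF finite_wlen_le finite_atLeastAtMost_int] by (rule finite_subset)
qed

lemma obtain_increments_collision:
  assumes "infinite (UNIV :: 'a set)"
  obtains x h where "0 < wlen h" "wlen (x * h) = wlen x + wlen h"
    "increments r x = increments r (x * h)"
proof -
  have "\<not> UNIV \<subseteq> {g. wlen g \<le> card (range (increments r))}"
    using assms finite_wlen_le finite_subset by blast
  then obtain g where "g \<notin> {g. wlen g \<le> card (range (increments r))}"
    by blast
  then have long: "card (range (increments r)) < wlen g"
    by simp
  obtain w where w: "set w \<subseteq> A" "length w = wlen g" "g = prod_list w"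
    using obtain_geodesic_word[of 1 g] by (auto simp: wlen_def)
  define p where "p t = prod_list (take t w)" for t
  have wlen_p: "wlen (p t) = t" if "t \<le> length w" for t
    using wlen_take_geodesic[of w 1 t] w that by (simp add: p_def)
  have "\<not> inj_on (increments r \<circ> p) {0..length w}"
  proof
    assume "inj_on (increments r \<circ> p) {0..length w}"
    then have "card {0..length w} \<le> card (range (increments r))"
      using card_inj_on_le[of _ _ "range (increments r)"] finite_range_increments by fastforce
    with long w(2) show False
      by simp
  qed
  then obtain i j where ij: "i < j" "j \<le> length w" "increments r (p i) = increments r (p j)"
    using linorder_inj_onI'[of "{0..length w}" "increments r \<circ> p"] by auto
  define h where "h = prod_list (drop i (take j w))"
  have p_j: "p j = p i * h"
    using prod_list_take_split[of i j w] ij(1) by (simp add: p_def h_def)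
  have "wlen h = j - i"
    using wlen_infix_geodesic[of w i j] w ij wlen_p[of "length w"] by (simp add: h_def p_def)
  with ij that[of h "p i"] p_j wlen_p[of i] wlen_p[of j] show thesis
    by simp
qed

lemma infinite_order_if_increments_agree:
  assumes "0 < wlen h" and geo: "wlen (x * h) = wlen x + wlen h"
    and same: "increments (n0 + r0) x = increments (n0 + r0) (x * h)"
  shows "infinite_order h"
proof -
  have agree: "wlen (x * g) + wlen (x * h) = wlen (x * h * g) + wlen x"
    if "wlen g \<le> n0 + r0" for g
  proof -
    have "int (wlen (x * g)) - int (wlen x) = int (wlen (x * h * g)) - int (wlen (x * h))"
      using fun_cong[OF same, of g] that by (simp add: increments_def)
    then show ?thesis
      by linarith
  qed
  have powers: "wlen (x * h ^ m) = wlen x + m * wlen h" for m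
    using agree geo by (rule wlen_mult_power)
  have "inj (\<lambda>m. h ^ m)"
  proof (rule injI)
    fix a b :: nat
    assume "h ^ a = h ^ b"
    then have "wlen (x * h ^ a) = wlen (x * h ^ b)"
      by simp
    with \<open>0 < wlen h\<close> show "a = b"
      unfolding powers by simp
  qed
  then show ?thesis
    by (rule infinite_orderI)
qed

end

theorem theorem4p1:
  assumes "infinite (UNIV :: 'a::monoid_mult set)"
    and "cancellative TYPE('a)"
    and "\<exists>A::'a set. finite A \<and> generated_submonoid A = UNIV"
    and "hyperbolic_monoid TYPE('a)"
  shows "\<exists>m::'a. infinite_order m"
proof -
  \<comment> \<open>the third hypothesis is implied by the fourth\<close>
  have left_cancel: "\<And>a b c::'a. a * b = a * c \<Longrightarrow> b = c"
    using assms(2) unfolding cancellative_def by blast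
  show ?thesis
  proof (cases "\<forall>x::'a. \<exists>y. x * y = 1")
    case True
    from assms(4) obtain A :: "'a set" and \<delta> where A: "finite A" "generated_submonoid A = UNIV"
      and thin: "\<And>x S. geodesic_triangle (cayley_digraph A) x S \<Longrightarrow> thin_triangle (cayley_digraph A) \<delta> S"
      unfolding hyperbolic_monoid_def hyperbolic_digraph_def by blast
    interpret hyperbolic_cayley_group A \<delta>
      by (unfold_locales; (use A thin left_cancel True in blast))
    obtain x h where "0 < wlen h" "wlen (x * h) = wlen x + wlen h"
      "increments (n0 + r0) x = increments (n0 + r0) (x * h)"
      using assms(1) by (rule obtain_increments_collision)
    then have "infinite_order h"
      by (rule infinite_order_if_increments_agree)
    then show ?thesis ..
  next
    case False
    then obtain x :: 'a where "\<And>y. x * y \<noteq> 1"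
      by blast
    with left_cancel have "infinite_order x"
      by (rule infinite_order_if_no_right_inverse)
    then show ?thesis ..
  qed
qed

end
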